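(* Let $k\ge1$ and let $f$ be a sufficiently differentiable (at least $(3k-2)$-times differentiable) function of one variable. Then $$\Delta\Bigl(\tfrac{\partial}{\partial x_1},\dots,\tfrac{\partial}{\partial x_{2k}}\Bigr)\Delta\Bigl(\tfrac{\partial}{\partial x_1},\dots,\tfrac{\partial}{\partial x_{k}}\Bigr)\Delta\Bigl(\tfrac{\partial}{\partial x_{k+1}},\dots,\tfrac{\partial}{\partial x_{2k}}\Bigr)\prod_{i=1}^{2k}f(x_i),$$ evaluated at $x_1=\cdots=x_k=1$, $x_{k+1}=\cdots=x_{2k}=-1$, equals $k!^2\det(m_{ij})_{1\le i,j\le 2k}$, where for $1\le i\le k$ and $1\le j\le 2k$, $$m_{ij}=f^{(i+j-2)}(1),\qquad m_{k+i,j}=f^{(i+j-2)}(-1).$$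
   Context: $\Delta(z_1,\dots,z_n)=\prod_{1\le i<j\le n}(z_j-z_i)$ is the Vandermonde polynomial, and $\Delta(\partial/\partial x_{i_1},\dots,\partial/\partial x_{i_n})$ denotes the constant-coefficient differential operator obtained by substituting $z_m=\partial/\partial x_{i_m}$. *)

theory Defs
  imports "HOL-Analysis.Analysis" "Jordan_Normal_Form.Determinant"
begin

text \<open>Functions of several real variables x_1, x_2, ... are modelled as
  functions of a point (nat \<Rightarrow> real); only finitely many coordinates matter.\<close>

definition partial :: "nat \<Rightarrow> ((nat \<Rightarrow> real) \<Rightarrow> real) \<Rightarrow> (nat \<Rightarrow> real) \<Rightarrow> real" where
  "partial i F x = deriv (\<lambda>t. F (x(i := t))) (x i)"

definition diff_op :: "nat \<Rightarrow> nat \<Rightarrow> ((nat \<Rightarrow> real) \<Rightarrow> real) \<Rightarrow> (nat \<Rightarrow> real) \<Rightarrow> real" where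
  "diff_op i j F = (\<lambda>x. partial j F x - partial i F x)"

definition vand_pairs :: "nat list \<Rightarrow> (nat \<times> nat) list" where
  "vand_pairs xs = [(xs ! a, xs ! b). b \<leftarrow> [0..<length xs], a \<leftarrow> [0..<b]]"

text \<open>The differential operator Delta(d/dx_{i_1},...,d/dx_{i_n}) =
  prod_{m<l} (d/dx_{i_l} - d/dx_{i_m}), i.e. the composition of the factors.\<close>
definition vand_op :: "nat list \<Rightarrow> ((nat \<Rightarrow> real) \<Rightarrow> real) \<Rightarrow> (nat \<Rightarrow> real) \<Rightarrow> real" where
  "vand_op xs F = foldr (\<lambda>(i, j) G. diff_op i j G) (vand_pairs xs) F"

end

theory Submission
  imports Defs "HOL-Library.Poly_Mapping"
begin

(* The operator Q(d/dx_1, ..., d/dx_n) maps the product of the f(x_i) to the sum, over the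
   monomials X^a of Q, of their coefficients times the product of the f^(a_i)(x_i). The
   composed operator is thus given by the polynomial V_2k V_k V'_k, a product of Vandermonde
   determinants in X_1, ..., X_2k. Expanding the two small ones by the Leibniz formula, the
   term of (sigma, tau) multiplies row i of V_2k by X_i^(r i), where r is sigma on the first
   block and tau on the second; at (1, ..., 1, -1, ..., -1) it becomes det (f^(j + r i)(x_i)),
   which is m with its rows permuted by the direct sum of sigma and tau. That sign cancels the
   Leibniz sign, so each of the k!^2 terms contributes det m. No x_i is differentiated more
   than (2k - 1) + (k - 1) = 3k - 2 times. *)

type_synonym mpoly = "(nat \<Rightarrow>\<^sub>0 nat) \<Rightarrow>\<^sub>0 real"

definition mvar :: "nat \<Rightarrow> mpoly" where
  "mvar j = Poly_Mapping.single (Poly_Mapping.single j 1) 1"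

definition deriv_monom :: "(real \<Rightarrow> real) \<Rightarrow> nat \<Rightarrow> (nat \<Rightarrow>\<^sub>0 nat) \<Rightarrow> (nat \<Rightarrow> real) \<Rightarrow> real" where
  "deriv_monom f n a x = (\<Prod>i\<in>{1..n}. (deriv ^^ Poly_Mapping.lookup a i) f (x i))"

definition poly_op :: "(real \<Rightarrow> real) \<Rightarrow> nat \<Rightarrow> mpoly \<Rightarrow> (nat \<Rightarrow> real) \<Rightarrow> real" where
  "poly_op f n Q x = (\<Sum>a\<in>Poly_Mapping.keys Q. Poly_Mapping.lookup Q a * deriv_monom f n a x)"

lemma has_real_derivative_deriv_monom:
  assumes j: "j \<in> {1..n}" and d: "(deriv ^^ Poly_Mapping.lookup a j) f differentiable (at t)"
  shows "((\<lambda>s. deriv_monom f n a (x(j := s))) has_real_derivative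
           deriv_monom f n (Poly_Mapping.single j 1 + a) (x(j := t))) (at t)"
proof -
  let ?g = "(deriv ^^ Poly_Mapping.lookup a j) f"
  let ?C = "\<Prod>i\<in>{1..n}-{j}. (deriv ^^ Poly_Mapping.lookup a i) f (x i)"
  have split: "deriv_monom f n b (x(j := s)) = (deriv ^^ Poly_Mapping.lookup b j) f s * ?C"
    if "\<forall>i\<in>{1..n}-{j}. Poly_Mapping.lookup b i = Poly_Mapping.lookup a i" for b s
  proof -
    have "(\<Prod>i\<in>{1..n}-{j}. (deriv ^^ Poly_Mapping.lookup b i) f ((x(j := s)) i)) = ?C"
      using that by (intro prod.cong) auto
    then show ?thesis
      unfolding deriv_monom_def using j by (simp add: prod.remove)
  qed
  have "(?g has_real_derivative deriv ?g t) (at t)"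
    using d DERIV_deriv_iff_real_differentiable by blast
  then have "((\<lambda>s. ?g s * ?C) has_real_derivative deriv ?g t * ?C) (at t)"
    by (rule DERIV_cmult_right)
  then show ?thesis
    by (simp add: split lookup_add lookup_single)
qed

lemma poly_op_add: "poly_op f n (P + Q) x = poly_op f n P x + poly_op f n Q x"
  unfolding poly_op_def by (rule setsum_keys_plus_distrib) (auto simp: distrib_right)

lemma poly_op_zero [simp]: "poly_op f n 0 x = 0"
  unfolding poly_op_def by simp

lemma poly_op_uminus: "poly_op f n (- Q) x = - poly_op f n Q x"
  unfolding poly_op_def by (simp add: sum_negf)

lemma poly_op_diff: "poly_op f n (P - Q) x = poly_op f n P x - poly_op f n Q x"
  using poly_op_add[of f n P "- Q" x] by (simp add: poly_op_uminus)

lemma poly_op_sum: "poly_op f n (\<Sum>s\<in>S. P s) x = (\<Sum>s\<in>S. poly_op f n (P s) x)"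
  by (induction S rule: infinite_finite_induct) (simp_all add: poly_op_add)

lemma poly_op_of_nat_mult: "poly_op f n (of_nat m * Q) x = of_nat m * poly_op f n Q x"
  by (induction m) (simp_all add: distrib_right poly_op_add)

lemma poly_op_of_int_mult: "poly_op f n (of_int c * Q) x = of_int c * poly_op f n Q x"
  by (rule int_cases2[of c]) (simp_all add: poly_op_of_nat_mult poly_op_uminus)

lemma poly_op_single: "poly_op f n (Poly_Mapping.single a c) x = c * deriv_monom f n a x"
  unfolding poly_op_def by simp

lemma poly_op_one: "poly_op f n 1 = (\<lambda>x. \<Prod>i\<in>{1..n}. f (x i))"
  by (simp add: fun_eq_iff poly_op_def deriv_monom_def)

lemma poly_mapping_eq_sum_single:
  fixes Q :: "'a \<Rightarrow>\<^sub>0 'b::comm_monoid_add"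
  shows "Q = (\<Sum>a\<in>Poly_Mapping.keys Q. Poly_Mapping.single a (Poly_Mapping.lookup Q a))"
  by (rule poly_mapping_eqI) (auto simp: lookup_sum lookup_single when_def in_keys_iff)

lemma poly_op_mvar_mult:
  "poly_op f n (mvar j * Q) x =
     (\<Sum>a\<in>Poly_Mapping.keys Q. Poly_Mapping.lookup Q a * deriv_monom f n (Poly_Mapping.single j 1 + a) x)"
proof -
  have "mvar j * Q = mvar j * (\<Sum>a\<in>Poly_Mapping.keys Q. Poly_Mapping.single a (Poly_Mapping.lookup Q a))"
    by (subst poly_mapping_eq_sum_single) (rule refl)
  also have "\<dots> = (\<Sum>a\<in>Poly_Mapping.keys Q.
      Poly_Mapping.single (Poly_Mapping.single j 1 + a) (Poly_Mapping.lookup Q a))"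
    by (simp add: mvar_def sum_distrib_left mult_single)
  finally show ?thesis
    by (simp add: poly_op_sum poly_op_single)
qed

lemma partial_poly_op:
  assumes "j \<in> {1..n}"
    and "\<forall>a\<in>Poly_Mapping.keys Q. \<forall>t. (deriv ^^ Poly_Mapping.lookup a j) f differentiable (at t)"
  shows "partial j (poly_op f n Q) x = poly_op f n (mvar j * Q) x"
proof -
  have "((\<lambda>t. poly_op f n Q (x(j := t))) has_real_derivative
      (\<Sum>a\<in>Poly_Mapping.keys Q. Poly_Mapping.lookup Q a *
         deriv_monom f n (Poly_Mapping.single j 1 + a) (x(j := x j)))) (at (x j))"
    unfolding poly_op_def
    by (intro DERIV_sum DERIV_cmult has_real_derivative_deriv_monom) (use assms in auto)
  then show ?thesis
    unfolding partial_def poly_op_mvar_mult by (simp add: DERIV_imp_deriv)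
qed

lemma diff_op_poly_op:
  assumes "i \<in> {1..n}" "j \<in> {1..n}"
    and "\<forall>a\<in>Poly_Mapping.keys Q. \<forall>t.
           (deriv ^^ Poly_Mapping.lookup a i) f differentiable (at t) \<and>
           (deriv ^^ Poly_Mapping.lookup a j) f differentiable (at t)"
  shows "diff_op i j (poly_op f n Q) = poly_op f n ((mvar j - mvar i) * Q)"
  unfolding diff_op_def using assms
  by (auto simp: partial_poly_op left_diff_distrib poly_op_diff)

definition pair_diffs :: "(nat \<times> nat) list \<Rightarrow> mpoly" where
  "pair_diffs ps = prod_list (map (\<lambda>(i, j). mvar j - mvar i) ps)"

definition pair_count :: "nat \<Rightarrow> (nat \<times> nat) list \<Rightarrow> nat" where
  "pair_count i ps = length (filter (\<lambda>(a, b). a = i \<or> b = i) ps)"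

lemma pair_diffs_append: "pair_diffs (ps @ qs) = pair_diffs ps * pair_diffs qs"
  by (simp add: pair_diffs_def)

lemma pair_count_append: "pair_count i (ps @ qs) = pair_count i ps + pair_count i qs"
  by (simp add: pair_count_def)

lemma keys_mvar_diff:
  "Poly_Mapping.keys (mvar j - mvar i) \<subseteq> {Poly_Mapping.single i 1, Poly_Mapping.single j 1}"
  using keys_diff[of "mvar j" "mvar i"] by (auto simp: mvar_def)

lemma lookup_keys_pair_diffs_mult_le:
  "c \<in> Poly_Mapping.keys (pair_diffs ps * Q) \<Longrightarrow>
     \<exists>b\<in>Poly_Mapping.keys Q. Poly_Mapping.lookup c i \<le> pair_count i ps + Poly_Mapping.lookup b i"
proof (induction ps arbitrary: c)
  case Nil
  then show ?case by (auto simp: pair_diffs_def pair_count_def)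
next
  case (Cons p ps)
  obtain u v where p: "p = (u, v)" by (cases p)
  have "c \<in> Poly_Mapping.keys ((mvar v - mvar u) * (pair_diffs ps * Q))"
    using Cons.prems by (simp add: pair_diffs_def p mult.assoc)
  then obtain a d where a: "a \<in> Poly_Mapping.keys (mvar v - mvar u)"
    and d: "d \<in> Poly_Mapping.keys (pair_diffs ps * Q)" and c: "c = a + d"
    using keys_mult by blast
  have "a = Poly_Mapping.single u 1 \<or> a = Poly_Mapping.single v 1"
    using a keys_mvar_diff[of v u] by blast
  then have "Poly_Mapping.lookup a i \<le> (if u = i \<or> v = i then 1 else 0)"
    by (auto simp: lookup_single when_def)
  moreover obtain b where b: "b \<in> Poly_Mapping.keys Q"
    and "Poly_Mapping.lookup d i \<le> pair_count i ps + Poly_Mapping.lookup b i"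
    using Cons.IH[OF d] by blast
  ultimately have "Poly_Mapping.lookup c i \<le> pair_count i (p # ps) + Poly_Mapping.lookup b i"
    by (auto simp: c lookup_add pair_count_def p)
  with b show ?case by blast
qed

lemma foldr_diff_op_poly_op:
  assumes smooth: "\<forall>m < N. \<forall>t. (deriv ^^ m) f differentiable (at t)"
    and ps: "\<forall>(i, j)\<in>set ps. i \<in> {1..n} \<and> j \<in> {1..n}"
    and Q: "\<forall>a\<in>Poly_Mapping.keys Q. \<forall>i. Poly_Mapping.lookup a i + pair_count i ps \<le> N"
  shows "foldr (\<lambda>(i, j) G. diff_op i j G) ps (poly_op f n Q) = poly_op f n (pair_diffs ps * Q)"
  using ps Q
proof (induction ps)
  case Nil
  then show ?case by (simp add: pair_diffs_def)
next
  case (Cons p ps)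
  obtain u v where p: "p = (u, v)" by (cases p)
  have IH: "foldr (\<lambda>(i, j) G. diff_op i j G) ps (poly_op f n Q) = poly_op f n (pair_diffs ps * Q)"
  proof (rule Cons.IH)
    show "\<forall>(i, j)\<in>set ps. i \<in> {1..n} \<and> j \<in> {1..n}"
      using Cons.prems(1) by simp
    have "pair_count i ps \<le> pair_count i (p # ps)" for i
      by (simp add: pair_count_def)
    then show "\<forall>a\<in>Poly_Mapping.keys Q. \<forall>i. Poly_Mapping.lookup a i + pair_count i ps \<le> N"
      using Cons.prems(2) by (meson add_left_mono order_trans)
  qed
  have order_less: "Poly_Mapping.lookup c w < N"
    if c: "c \<in> Poly_Mapping.keys (pair_diffs ps * Q)" and w: "w = u \<or> w = v" for c w
  proof -
    obtain b where b: "b \<in> Poly_Mapping.keys Q"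
      and "Poly_Mapping.lookup c w \<le> pair_count w ps + Poly_Mapping.lookup b w"
      using lookup_keys_pair_diffs_mult_le[OF c] by blast
    moreover have "pair_count w (p # ps) = Suc (pair_count w ps)"
      using w by (auto simp: pair_count_def p)
    moreover have "Poly_Mapping.lookup b w + pair_count w (p # ps) \<le> N"
      using Cons.prems(2) b by blast
    ultimately show ?thesis
      by linarith
  qed
  have "foldr (\<lambda>(i, j) G. diff_op i j G) (p # ps) (poly_op f n Q) =
      diff_op u v (poly_op f n (pair_diffs ps * Q))"
    by (simp add: p IH)
  also have "\<dots> = poly_op f n ((mvar v - mvar u) * (pair_diffs ps * Q))"
    by (rule diff_op_poly_op) (use Cons.prems smooth order_less in \<open>auto simp: p\<close>)
  also have "\<dots> = poly_op f n (pair_diffs (p # ps) * Q)"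
    by (simp add: pair_diffs_def p mult.assoc)
  finally show ?case .
qed

lemma det_mat_leibniz:
  "det (mat n n (\<lambda>(i, j). A i j)) =
     (\<Sum>p | p permutes {0..<n}. of_int (sign p) * (\<Prod>i = 0..<n. A i (p i)))"
  by (subst det_def'[of _ n]) (auto simp: permutes_in_image intro!: sum.cong prod.cong)

lemma det_mult_rows:
  fixes c :: "nat \<Rightarrow> 'a::comm_ring_1"
  shows "det (mat n n (\<lambda>(i, j). c i * A i j)) = prod c {0..<n} * det (mat n n (\<lambda>(i, j). A i j))"
  by (simp add: det_mat_leibniz prod.distrib sum_distrib_left mult_ac)

lemma det_vandermonde_column_reduction:
  fixes x :: "nat \<Rightarrow> 'a::comm_ring_1"
  shows "det (mat n n (\<lambda>(i, j). x i ^ j)) =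
         det (mat n n (\<lambda>(i, j). if j = 0 then 1 else x i ^ (j - 1) * (x i - x 0)))"
proof -
  define V where "V = mat n n (\<lambda>(i, j). x i ^ j)"
  define U :: "'a mat"
    where "U = mat n n (\<lambda>(l, j). (if l = j then 1 else 0) - (if Suc l = j then x 0 else 0))"
  have V: "V \<in> carrier_mat n n" and U: "U \<in> carrier_mat n n"
    unfolding V_def U_def by auto
  have "det U = prod_list (diag_mat U)"
    by (rule det_upper_triangular[OF _ U]) (auto simp: U_def upper_triangular_def)
  also have "diag_mat U = map (\<lambda>i. 1) [0..<n]"
    unfolding diag_mat_def by (rule map_cong) (auto simp: U_def)
  finally have "det U = 1"
    by (simp add: map_replicate_const)
  (* Right multiplication by U subtracts x_0 times each column from the next one. *)
  moreover have "(V * U) $$ (i, j) = (if j = 0 then 1 else x i ^ (j - 1) * (x i - x 0))"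
    if "i < n" "j < n" for i j
  proof -
    have "(V * U) $$ (i, j) =
        (\<Sum>l<n. x i ^ l * ((if l = j then 1 else 0) - (if Suc l = j then x 0 else 0)))"
      using that V U by (simp add: V_def U_def scalar_prod_def atLeast0LessThan)
    also have "\<dots> = (\<Sum>l<n. if l = j then x i ^ l else 0) - (\<Sum>l<n. if Suc l = j then x i ^ l * x 0 else 0)"
      unfolding sum_subtractf[symmetric] by (rule sum.cong) auto
    also have "(\<Sum>l<n. if l = j then x i ^ l else 0) = x i ^ j"
      using that by simp
    also have "(\<Sum>l<n. if Suc l = j then x i ^ l * x 0 else 0) = (if j = 0 then 0 else x i ^ (j - 1) * x 0)"
      using that by (cases j) auto
    also have "x i ^ j - \<dots> = (if j = 0 then 1 else x i ^ (j - 1) * (x i - x 0))"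
      by (cases j) (auto simp: algebra_simps)
    finally show ?thesis .
  qed
  then have "V * U = mat n n (\<lambda>(i, j). if j = 0 then 1 else x i ^ (j - 1) * (x i - x 0))"
    using V U by (intro eq_matI) auto
  ultimately show ?thesis
    using det_mult[OF V U] by (simp add: V_def)
qed

lemma det_vandermonde:
  fixes x :: "nat \<Rightarrow> 'a::comm_ring_1"
  shows "det (mat n n (\<lambda>(i, j). x i ^ j)) = (\<Prod>b<n. \<Prod>a<b. x b - x a)"
proof (induction n arbitrary: x)
  case 0
  then show ?case by simp
next
  case (Suc n)
  define W where "W = mat (Suc n) (Suc n) (\<lambda>(i, j). if j = 0 then 1 else x i ^ (j - 1) * (x i - x 0))"
  have W: "W \<in> carrier_mat (Suc n) (Suc n)"
    unfolding W_def by simp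
  have "det (mat (Suc n) (Suc n) (\<lambda>(i, j). x i ^ j)) = (\<Sum>j<Suc n. W $$ (0, j) * cofactor W 0 j)"
    unfolding det_vandermonde_column_reduction W_def[symmetric] by (rule laplace_expansion_row[OF W]) simp
  also have "\<dots> = det (mat_delete W 0 0)"
    by (simp add: W_def cofactor_def sum.lessThan_Suc_shift del: sum.lessThan_Suc)
  also have "mat_delete W 0 0 = mat n n (\<lambda>(i, j). (x (Suc i) - x 0) * x (Suc i) ^ j)"
    by (rule eq_matI) (auto simp: W_def mat_delete_def mult.commute)
  also have "det \<dots> = (\<Prod>b<n. x (Suc b) - x 0) * (\<Prod>b<n. \<Prod>a<b. x (Suc b) - x (Suc a))"
    by (subst det_mult_rows) (simp add: Suc.IH atLeast0LessThan)
  also have "\<dots> = (\<Prod>b<Suc n. \<Prod>a<b. x b - x a)"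
    by (simp add: prod.lessThan_Suc_shift prod.distrib del: prod.lessThan_Suc)
  finally show ?case .
qed

lemma vand_pairs_snoc: "vand_pairs (xs @ [y]) = vand_pairs xs @ map (\<lambda>x. (x, y)) xs"
proof -
  let ?zs = "xs @ [y]"
  have "vand_pairs ?zs =
      [(?zs ! a, ?zs ! b). b \<leftarrow> [0..<length xs], a \<leftarrow> [0..<b]] @ map (\<lambda>a. (?zs ! a, y)) [0..<length xs]"
    by (simp add: vand_pairs_def concat_map_singleton nth_append)
  also have "[(?zs ! a, ?zs ! b). b \<leftarrow> [0..<length xs], a \<leftarrow> [0..<b]] = vand_pairs xs"
    unfolding vand_pairs_def by (intro arg_cong[where f = concat] map_cong refl) (auto simp: nth_append)
  also have "map (\<lambda>a. (?zs ! a, y)) [0..<length xs] = map (\<lambda>x. (x, y)) xs"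
    by (rule nth_equalityI) (auto simp: nth_append)
  finally show ?thesis .
qed

lemma set_vand_pairs: "(a, b) \<in> set (vand_pairs zs) \<Longrightarrow> a \<in> set zs \<and> b \<in> set zs"
  by (auto simp: vand_pairs_def)

lemma pair_count_vand_pairs:
  "distinct zs \<Longrightarrow> pair_count i (vand_pairs zs) = (if i \<in> set zs then length zs - 1 else 0)"
proof (induction zs rule: rev_induct)
  case Nil
  then show ?case by (simp add: pair_count_def vand_pairs_def)
next
  case (snoc y xs)
  then have "pair_count i (map (\<lambda>x. (x, y)) xs) = (if i = y then length xs else if i \<in> set xs then 1 else 0)"
    by (auto simp: pair_count_def o_def distinct_length_filter filter_empty_conv distinct_card)
  with snoc show ?case
    by (auto simp: vand_pairs_snoc pair_count_append dest: length_pos_if_in_set)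
qed

lemma pair_diffs_vand_pairs:
  "pair_diffs (vand_pairs zs) = (\<Prod>b<length zs. \<Prod>a<b. mvar (zs ! b) - mvar (zs ! a))"
proof (induction zs rule: rev_induct)
  case Nil
  then show ?case by (simp add: pair_diffs_def vand_pairs_def)
next
  case (snoc y xs)
  have "pair_diffs (vand_pairs (xs @ [y])) = pair_diffs (vand_pairs xs) * (\<Prod>x\<leftarrow>xs. mvar y - mvar x)"
    by (simp add: vand_pairs_snoc pair_diffs_def o_def)
  also have "(\<Prod>x\<leftarrow>xs. mvar y - mvar x) = (\<Prod>a<length xs. mvar y - mvar (xs ! a))"
    by (simp add: prod.list_conv_set_nth atLeast0LessThan)
  also have "pair_diffs (vand_pairs xs) =
      (\<Prod>b<length xs. \<Prod>a<b. mvar ((xs @ [y]) ! b) - mvar ((xs @ [y]) ! a))"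
    unfolding snoc.IH by (auto simp: nth_append intro!: prod.cong)
  also have "(\<Prod>a<length xs. mvar y - mvar (xs ! a)) =
      (\<Prod>a<length xs. mvar ((xs @ [y]) ! length xs) - mvar ((xs @ [y]) ! a))"
    by (auto simp: nth_append intro!: prod.cong)
  finally show ?case by simp
qed

lemma pair_diffs_vand_pairs_upt:
  "pair_diffs (vand_pairs [m..<n]) = det (mat (n - m) (n - m) (\<lambda>(i, j). mvar (m + i) ^ j))"
  by (simp add: pair_diffs_vand_pairs det_vandermonde)

lemma mvar_power: "mvar j ^ m = Poly_Mapping.single (Poly_Mapping.single j m) 1"
  by (induction m) (simp_all add: mvar_def mult_single single_add[symmetric])

lemma prod_single_one:
  "(\<Prod>i\<in>S. Poly_Mapping.single (g i) 1) =
     (Poly_Mapping.single (\<Sum>i\<in>S. g i) 1 :: 'a::comm_monoid_add \<Rightarrow>\<^sub>0 'b::comm_semiring_1)"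
  by (induction S rule: infinite_finite_induct) (simp_all add: mult_single)

lemma poly_op_prod_mvar_power:
  "poly_op f n (\<Prod>j\<in>{1..n}. mvar j ^ m j) x = (\<Prod>j\<in>{1..n}. (deriv ^^ m j) f (x j))"
proof -
  define a where "a = (\<Sum>j\<in>{1..n}. Poly_Mapping.single j (m j))"
  have "(\<Prod>j\<in>{1..n}. mvar j ^ m j) = Poly_Mapping.single a 1"
    unfolding mvar_power a_def by (rule prod_single_one)
  moreover have "Poly_Mapping.lookup a j = m j" if "j \<in> {1..n}" for j
    using that by (simp add: a_def lookup_sum lookup_single when_def)
  ultimately show ?thesis
    by (simp add: poly_op_single deriv_monom_def)
qed

lemma poly_op_det:
  "poly_op f n (det (mat n n (\<lambda>(i, j). mvar (Suc i) ^ e i j))) x =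
     det (mat n n (\<lambda>(i, j). (deriv ^^ e i j) f (x (Suc i))))"
proof -
  have "poly_op f n (\<Prod>i = 0..<n. mvar (Suc i) ^ e i (p i)) x =
      (\<Prod>i = 0..<n. (deriv ^^ e i (p i)) f (x (Suc i)))" for p
    using poly_op_prod_mvar_power[of f n "\<lambda>j. e (j - 1) (p (j - 1))" x]
    by (simp add: prod.atLeast1_atMost_eq atLeast0LessThan)
  then show ?thesis
    by (simp add: det_mat_leibniz poly_op_sum poly_op_of_int_mult)
qed

lemma poly_op_vandermonde_mult:
  "poly_op f n (det (mat n n (\<lambda>(i, j). mvar (Suc i) ^ j)) * (\<Prod>i = 0..<n. mvar (Suc i) ^ r i)) x =
     det (mat n n (\<lambda>(i, j). (deriv ^^ (j + r i)) f (x (Suc i))))"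
proof -
  have "det (mat n n (\<lambda>(i, j). mvar (Suc i) ^ j)) * (\<Prod>i = 0..<n. mvar (Suc i) ^ r i) =
      det (mat n n (\<lambda>(i, j). mvar (Suc i) ^ (j + r i)))"
    using det_mult_rows[where c = "\<lambda>i. mvar (Suc i) ^ r i" and A = "\<lambda>i j. mvar (Suc i) ^ j" and n = n]
    by (simp add: power_add mult.commute)
  then show ?thesis
    by (simp add: poly_op_det)
qed

lemma permutes_direct_sum:
  fixes k :: nat
  assumes \<sigma>: "\<sigma> permutes {0..<k}" and \<tau>: "\<tau> permutes {0..<k}"
  obtains \<pi> where "\<pi> permutes {0..<2*k}" "sign \<pi> = sign \<sigma> * sign \<tau>"
    "\<And>i. i < k \<Longrightarrow> \<pi> i = \<sigma> i" "\<And>i. k \<le> i \<Longrightarrow> i < 2*k \<Longrightarrow> \<pi> i = k + \<tau> (i - k)"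
proof
  define \<tau>' where "\<tau>' = map_permutation {0..<k} ((+) k) \<tau>"
  have "bij_betw ((+) k) {0..<k} {k..<2*k}"
    by (auto simp: bij_betw_def image_add_atLeastLessThan)
  then have \<tau>': "\<tau>' permutes {k..<2*k}"
    unfolding \<tau>'_def by (rule map_permutation_permutes[OF _ \<tau>])
  show "\<sigma> \<circ> \<tau>' permutes {0..<2*k}"
    by (intro permutes_compose permutes_subset[OF \<tau>'] permutes_subset[OF \<sigma>]) auto
  have "permutation \<sigma>" "permutation \<tau>'"
    using \<sigma> \<tau>' permutation_permutes by blast+
  then show "sign (\<sigma> \<circ> \<tau>') = sign \<sigma> * sign \<tau>"
    using sign_map_permutation[of "(+) k" "{0..<k}" \<tau>] \<tau> by (simp add: \<tau>'_def sign_compose)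
  show "(\<sigma> \<circ> \<tau>') i = \<sigma> i" if "i < k" for i
    using that permutes_not_in[OF \<tau>'] by simp
  show "(\<sigma> \<circ> \<tau>') i = k + \<tau> (i - k)" if "k \<le> i" "i < 2*k" for i
    using that map_permutation_apply[of "(+) k" "{0..<k}" "i - k" \<tau>] permutes_not_in[OF \<sigma>]
    by (simp add: \<tau>'_def)
qed

lemma det_deriv_rows_block_perm:
  fixes f :: "real \<Rightarrow> real"
  assumes \<sigma>: "\<sigma> permutes {0..<k}" and \<tau>: "\<tau> permutes {0..<k}"
  shows "det (mat (2*k) (2*k) (\<lambda>(i, j).
             (deriv ^^ (j + (if i < k then \<sigma> i else \<tau> (i - k)))) f (if i < k then a else b))) =
         of_int (sign \<sigma> * sign \<tau>) * det (mat (2*k) (2*k) (\<lambda>(i, j).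
             if i < k then (deriv ^^ (i + j)) f a else (deriv ^^ (i - k + j)) f b))"
    (is "det ?L = _ * det ?M")
proof -
  obtain \<pi> where \<pi>: "\<pi> permutes {0..<2*k}" and sign: "sign \<pi> = sign \<sigma> * sign \<tau>"
    and \<pi>_low: "\<And>i. i < k \<Longrightarrow> \<pi> i = \<sigma> i"
    and \<pi>_high: "\<And>i. k \<le> i \<Longrightarrow> i < 2*k \<Longrightarrow> \<pi> i = k + \<tau> (i - k)"
    using permutes_direct_sum[OF \<sigma> \<tau>] by blast
  have "?L = mat (2*k) (2*k) (\<lambda>(i, j). ?M $$ (\<pi> i, j))"
  proof (rule eq_matI)
    fix i j assume "i < dim_row (mat (2*k) (2*k) (\<lambda>(i, j). ?M $$ (\<pi> i, j)))"
      and "j < dim_col (mat (2*k) (2*k) (\<lambda>(i, j). ?M $$ (\<pi> i, j)))"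
    then have i: "i < 2*k" and j: "j < 2*k" by auto
    show "?L $$ (i, j) = mat (2*k) (2*k) (\<lambda>(i, j). ?M $$ (\<pi> i, j)) $$ (i, j)"
    proof (cases "i < k")
      case True
      with permutes_in_image[OF \<sigma>, of i] show ?thesis
        using i j by (simp add: \<pi>_low add.commute)
    next
      case False
      with permutes_in_image[OF \<tau>, of "i - k"] show ?thesis
        using i j by (simp add: \<pi>_high add.commute)
    qed
  qed auto
  then show ?thesis
    using det_permute_rows[OF _ \<pi>, of ?M] by (simp add: sign)
qed

lemma prod_two_blocks:
  fixes k :: nat
  shows "(\<Prod>i = 0..<2*k. if i < k then g i else h (i - k)) = prod g {0..<k} * prod h {0..<k}"
proof -
  have "(\<Prod>i = 0..<2*k. if i < k then g i else h (i - k)) =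
      (\<Prod>i = 0..<k. if i < k then g i else h (i - k)) * (\<Prod>i = k..<2*k. if i < k then g i else h (i - k))"
    by (rule prod.atLeastLessThan_concat[symmetric]) auto
  also have "(\<Prod>i = 0..<k. if i < k then g i else h (i - k)) = prod g {0..<k}"
    by (rule prod.cong) auto
  also have "(\<Prod>i = k..<2*k. if i < k then g i else h (i - k)) = (\<Prod>i = 0+k..<k+k. h (i - k))"
    by (rule prod.cong) (auto simp: mult_2)
  also have "\<dots> = prod h {0..<k}"
    unfolding prod.shift_bounds_nat_ivl by simp
  finally show ?thesis .
qed

lemma poly_op_vandermonde_blocks:
  fixes f :: "real \<Rightarrow> real"
  shows "poly_op f (2*k)
           (det (mat (2*k) (2*k) (\<lambda>(i, j). mvar (Suc i) ^ j)) *
            det (mat k k (\<lambda>(i, j). mvar (Suc i) ^ j)) *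
            det (mat k k (\<lambda>(i, j). mvar (Suc (k + i)) ^ j)))
           (\<lambda>i. if i \<le> k then a else b) =
         (fact k)^2 * det (mat (2*k) (2*k) (\<lambda>(i, j).
           if i < k then (deriv ^^ (i + j)) f a else (deriv ^^ (i - k + j)) f b))"
    (is "poly_op f _ ?P ?x = _ * det ?M")
proof -
  let ?V = "det (mat (2*k) (2*k) (\<lambda>(i, j). mvar (Suc i) ^ j))"
  let ?S = "{p. p permutes {0..<k}}"
  let ?mon = "\<lambda>\<sigma> \<tau>. (\<Prod>i = 0..<k. mvar (Suc i) ^ \<sigma> i) * (\<Prod>i = 0..<k. mvar (Suc (k + i)) ^ \<tau> i)"
  have expand: "?P = (\<Sum>\<sigma>\<in>?S. \<Sum>\<tau>\<in>?S. of_int (sign \<sigma>) * (of_int (sign \<tau>) * (?V * ?mon \<sigma> \<tau>)))"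
    unfolding det_mat_leibniz[where n = k and A = "\<lambda>i j. mvar (Suc i) ^ j"]
      det_mat_leibniz[where n = k and A = "\<lambda>i j. mvar (Suc (k + i)) ^ j"]
    by (simp add: sum_distrib_left sum_distrib_right sum_product ac_simps)
  have summand: "of_int (sign \<sigma>) * (of_int (sign \<tau>) * poly_op f (2*k) (?V * ?mon \<sigma> \<tau>) ?x) = det ?M"
    if "\<sigma> \<in> ?S" "\<tau> \<in> ?S" for \<sigma> \<tau>
  proof -
    define r where "r i = (if i < k then \<sigma> i else \<tau> (i - k))" for i
    have "?mon \<sigma> \<tau> = (\<Prod>i = 0..<2*k. mvar (Suc i) ^ r i)"
      unfolding prod_two_blocks[symmetric] by (intro prod.cong) (auto simp: r_def)
    then have "poly_op f (2*k) (?V * ?mon \<sigma> \<tau>) ?x = of_int (sign \<sigma> * sign \<tau>) * det ?M"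
      using det_deriv_rows_block_perm[of \<sigma> k \<tau> f a b] that
      by (simp add: poly_op_vandermonde_mult r_def Suc_le_eq if_distrib[of "\<lambda>t. (deriv ^^ t) f"] cong: if_cong)
    then show ?thesis
      by (simp add: mult_ac flip: of_int_mult)
  qed
  have "poly_op f (2*k) ?P ?x = (\<Sum>\<sigma>\<in>?S. \<Sum>\<tau>\<in>?S.
      of_int (sign \<sigma>) * (of_int (sign \<tau>) * poly_op f (2*k) (?V * ?mon \<sigma> \<tau>) ?x))"
    unfolding expand by (simp add: poly_op_sum poly_op_of_int_mult)
  also have "\<dots> = (\<Sum>\<sigma>\<in>?S. \<Sum>\<tau>\<in>?S. det ?M)"
    by (intro sum.cong refl summand)
  also have "\<dots> = (fact k)^2 * det ?M"
    by (simp add: card_permutations[of "{0..<k}" k] power2_eq_square)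
  finally show ?thesis .
qed

theorem lemma3:
  fixes f :: "real \<Rightarrow> real" and k :: nat
  assumes "k \<ge> 1"
    and "\<forall>m < 3 * k - 2. \<forall>x. (deriv ^^ m) f differentiable (at x)"
  shows "vand_op [1..<2*k+1] (vand_op [1..<k+1] (vand_op [k+1..<2*k+1]
            (\<lambda>x. \<Prod>i\<in>{1..2*k}. f (x i))))
           (\<lambda>i. if i \<le> k then 1 else -1)
         = (fact k)^2 * det (mat (2*k) (2*k) (\<lambda>(i, j).
              if i < k then (deriv ^^ (i + j)) f 1
              else (deriv ^^ (i - k + j)) f (-1)))"
proof -
  let ?ops = "vand_pairs [1..<2*k+1] @ vand_pairs [1..<k+1] @ vand_pairs [k+1..<2*k+1]"
  have "vand_op [1..<2*k+1] (vand_op [1..<k+1] (vand_op [k+1..<2*k+1] (poly_op f (2*k) 1))) =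
      foldr (\<lambda>(i, j) G. diff_op i j G) ?ops (poly_op f (2*k) 1)"
    by (simp add: vand_op_def)
  also have "\<dots> = poly_op f (2*k) (pair_diffs ?ops * 1)"
    by (rule foldr_diff_op_poly_op[OF assms(2)])
      (use assms(1) in \<open>auto dest!: set_vand_pairs simp: pair_count_append pair_count_vand_pairs\<close>)
  also have "pair_diffs ?ops * 1 =
      det (mat (2*k) (2*k) (\<lambda>(i, j). mvar (Suc i) ^ j)) *
      det (mat k k (\<lambda>(i, j). mvar (Suc i) ^ j)) *
      det (mat k k (\<lambda>(i, j). mvar (Suc (k + i)) ^ j))"
    by (simp add: pair_diffs_append pair_diffs_vand_pairs_upt mult.assoc del: upt_Suc)
  finally show ?thesis
    unfolding poly_op_one by (simp add: poly_op_vandermonde_blocks)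
qed

end
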